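(* Consider the tensor network template $(G,c)$ with the following data. - Three inputs $s_1,s_2,s_3$ and two outputs $t_1,t_2$. - Three vertices $v_1,v_2,v_3$. - Edges and capacities: - $s_2$–$v_1$, capacity $2$; - $v_1$–$v_2$, capacity $2$; - $v_1$–$v_3$, capacity $2$; - $s_1$–$v_2$, capacity $2$; - $v_2$–$t_1$, capacity $3$; - $s_3$–$v_3$, capacity $2$; - $v_3$–$t_2$, capacity $3$. Then $\mathrm{QMC}(G,c)=8$ and $\mathrm{QMF}(G,c)=7$.
   Context: A tensor network template $(G,c)$ consists of a finite undirected graph $G$ with edge set $E$ whose vertex set is partitioned as $S\sqcup T\sqcup V$. Every element of $S$ (inputs) and every element of $T$ (outputs) is an open end of degree $1$; the elements of $V$ are called vertices. For $u\in S\sqcup T$, $e(u)$ denotes the edge incident to $u$. A capacity function $c:E\to\mathbb{Z}_{>0}$ is given, and to each edge $e$ one associates $\mathbb{C}^{c_e}$ with a fixed basis. At each vertex $v$ of degree $d_v$ an ordering $e(v,1),\dots,e(v,d_v)$ of the incident edge-ends is fixed. A tensor assignment $\mathcal T=(\mathcal T_v)_{v\in V}$ chooses $\mathcal T_v\in\bigotimes_{i=1}^{d_v}\mathbb{C}^{c_{e(v,i)}}$ for each $v$. Let $V_S=\bigotimes_{u\in S}\mathbb{C}^{c_{e(u)}}$ and $V_T=\bigotimes_{u\in T}\mathbb{C}^{c_{e(u)}}$. Contracting the network along all edges gives $\beta(G,c;\mathcal T)\in\mathrm{Hom}(V_S,V_T)$, whose matrix entries are $\langle I_T|\beta|I_S\rangle=\sum_W\prod_{v\in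 V}(\mathcal T_v)_{W|_v}$. Here $W$ ranges over all assignments of basis indices to all edges that agree with $I_S$ on the input edges and with $I_T$ on the output edges, and $W|_v$ is the tuple of indices on $e(v,1),\dots,e(v,d_v)$. The quantum max-flow is $\mathrm{QMF}(G,c)=\max_{\mathcal T}\operatorname{rank}\beta(G,c;\mathcal T)$. An edge cut set is a set $C\subseteq E$ for which there is a partition $S\sqcup T\sqcup V=\bar S\sqcup\bar T$ with $S\subseteq\bar S$, $T\subseteq\bar T$, and $C$ equal to the set of edges having one endpoint in $\bar S$ and the other in $\bar T$. The quantum min-cut is $\mathrm{QMC}(G,c)=\min_C\prod_{e\in C}c_e$, the minimum taken over all edge cut sets $C$. *)

theory Defs
  imports "HOL-Library.FuncSet" "Jordan_Normal_Form.DL_Rank"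
begin

text \<open>A template is given by: inputs S, outputs T, vertices V (pairwise disjoint node sets),
a finite edge set E with endpoint map ends (an undirected edge e joins fst (ends e) and
snd (ends e)), and capacities c.\<close>

definition incident :: "'e set \<Rightarrow> ('e \<Rightarrow> 'n \<times> 'n) \<Rightarrow> 'n \<Rightarrow> 'e set" where
  "incident E ends u = {e \<in> E. fst (ends e) = u \<or> snd (ends e) = u}"

definition end_edges :: "'e set \<Rightarrow> ('e \<Rightarrow> 'n \<times> 'n) \<Rightarrow> 'n set \<Rightarrow> 'e set" where
  "end_edges E ends U = (\<Union>u\<in>U. incident E ends u)"

definition assignments :: "'e set \<Rightarrow> ('e \<Rightarrow> nat) \<Rightarrow> ('e \<Rightarrow> nat) set" where
  "assignments A c = PiE A (\<lambda>e. {..<c e})"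

text \<open>Matrix entry of the contraction beta(G,c;Tn) at output index I_T and input index I_S.
  A tensor at vertex v is a function of the indices on the edges incident to v
  (coordinates of the tensor in the fixed product basis).\<close>
definition contraction ::
  "'n set \<Rightarrow> 'n set \<Rightarrow> 'n set \<Rightarrow> 'e set \<Rightarrow> ('e \<Rightarrow> 'n \<times> 'n) \<Rightarrow> ('e \<Rightarrow> nat)
   \<Rightarrow> ('n \<Rightarrow> ('e \<Rightarrow> nat) \<Rightarrow> complex) \<Rightarrow> ('e \<Rightarrow> nat) \<Rightarrow> ('e \<Rightarrow> nat) \<Rightarrow> complex" where
  "contraction S T V E ends c Tn IT IS =
     (\<Sum>W \<in> {W \<in> assignments E c. restrict W (end_edges E ends S) = IS
                                  \<and> restrict W (end_edges E ends T) = IT}.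
        \<Prod>v\<in>V. Tn v (restrict W (incident E ends v)))"

definition enum_set :: "'a set \<Rightarrow> 'a list" where
  "enum_set A = (SOME xs. set xs = A \<and> distinct xs)"

definition set_mat_rank :: "'r set \<Rightarrow> 'c set \<Rightarrow> ('r \<Rightarrow> 'c \<Rightarrow> complex) \<Rightarrow> nat" where
  "set_mat_rank R C M =
     (let rs = enum_set R; cs = enum_set C
      in vec_space.rank (length rs) (mat (length rs) (length cs) (\<lambda>(i, j). M (rs ! i) (cs ! j))))"

definition QMF ::
  "'n set \<Rightarrow> 'n set \<Rightarrow> 'n set \<Rightarrow> 'e set \<Rightarrow> ('e \<Rightarrow> 'n \<times> 'n) \<Rightarrow> ('e \<Rightarrow> nat) \<Rightarrow> nat" where
  "QMF S T V E ends c =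
     Max {set_mat_rank (assignments (end_edges E ends T) c) (assignments (end_edges E ends S) c)
            (contraction S T V E ends c Tn) | Tn. True}"

definition edge_cut_sets ::
  "'n set \<Rightarrow> 'n set \<Rightarrow> 'n set \<Rightarrow> 'e set \<Rightarrow> ('e \<Rightarrow> 'n \<times> 'n) \<Rightarrow> 'e set set" where
  "edge_cut_sets S T V E ends =
     {C. \<exists>Sb Tb. Sb \<inter> Tb = {} \<and> Sb \<union> Tb = S \<union> T \<union> V \<and> S \<subseteq> Sb \<and> T \<subseteq> Tb \<and>
          C = {e \<in> E. (fst (ends e) \<in> Sb \<and> snd (ends e) \<in> Tb) \<or>
                       (fst (ends e) \<in> Tb \<and> snd (ends e) \<in> Sb)}}"

definition QMC ::
  "'n set \<Rightarrow> 'n set \<Rightarrow> 'n set \<Rightarrow> 'e set \<Rightarrow> ('e \<Rightarrow> 'n \<times> 'n) \<Rightarrow> ('e \<Rightarrow> nat) \<Rightarrow> nat" where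
  "QMC S T V E ends c = Min {\<Prod>e\<in>C. c e | C. C \<in> edge_cut_sets S T V E ends}"

datatype node = s1 | s2 | s3 | t1 | t2 | v1 | v2 | v3
datatype edge = e_s2v1 | e_v1v2 | e_v1v3 | e_s1v2 | e_v2t1 | e_s3v3 | e_v3t2

fun ex_ends :: "edge \<Rightarrow> node \<times> node" where
  "ex_ends e_s2v1 = (s2, v1)"
| "ex_ends e_v1v2 = (v1, v2)"
| "ex_ends e_v1v3 = (v1, v3)"
| "ex_ends e_s1v2 = (s1, v2)"
| "ex_ends e_v2t1 = (v2, t1)"
| "ex_ends e_s3v3 = (s3, v3)"
| "ex_ends e_v3t2 = (v3, t2)"

fun ex_cap :: "edge \<Rightarrow> nat" where
  "ex_cap e_s2v1 = 2"
| "ex_cap e_v1v2 = 2"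
| "ex_cap e_v1v3 = 2"
| "ex_cap e_s1v2 = 2"
| "ex_cap e_v2t1 = 3"
| "ex_cap e_s3v3 = 2"
| "ex_cap e_v3t2 = 3"

definition ex_S :: "node set" where "ex_S = {s1, s2, s3}"
definition ex_T :: "node set" where "ex_T = {t1, t2}"
definition ex_V :: "node set" where "ex_V = {v1, v2, v3}"
definition ex_E :: "edge set" where "ex_E = UNIV"

end

theory Submission
  imports Defs
begin

text \<open>
  Quantum min-cut: a cut is determined by which of \<open>v\<^sub>1, v\<^sub>2, v\<^sub>3\<close> lie on the input
  side; checking the eight choices, the cheapest one separates the inputs, at cost
  \<open>2 \<cdot> 2 \<cdot> 2 = 8\<close>.

  Quantum max-flow: the contraction sends \<open>x \<in> \<complex>\<^sup>2 \<otimes> \<complex>\<^sup>2 \<otimes> \<complex>\<^sup>2\<close>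
  (indexed by \<open>s\<^sub>1, s\<^sub>2, s\<^sub>3\<close>) to \<open>\<complex>\<^sup>3 \<otimes> \<complex>\<^sup>3\<close>, and we show it always has a
  nonzero kernel vector, so its rank is at most 7. The tensor at \<open>v\<^sub>1\<close> is a pencil
  \<open>y \<mapsto> T y\<close> of \<open>2 \<times> 2\<close> matrices; over \<open>\<complex>\<close> its determinant, a binary quadratic
  form, has a zero \<open>y\<^sub>1\<close>, so \<open>T y\<^sub>1 = \<alpha> \<otimes> \<gamma>\<close> has rank at most one. On a product vector
  \<open>p \<otimes> y \<otimes> r\<close> with \<open>T y = \<alpha> \<otimes> \<gamma>\<close> the contraction factors as
  \<open>(A\<^sub>\<alpha> p) \<otimes> (B\<^sub>\<gamma> r)\<close>, where \<open>A\<^sub>\<alpha>, B\<^sub>\<gamma> : \<complex>\<^sup>2 \<rightarrow> \<complex>\<^sup>3\<close>, and two planes in \<open>\<complex>\<^sup>3\<close> meet.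
  Hence two independent rank-one members of the pencil give a kernel vector
  \<open>p \<otimes> y\<^sub>1 \<otimes> r - q \<otimes> y\<^sub>2 \<otimes> s\<close>; if \<open>y\<^sub>1\<close> is a double zero, a tangency argument does the
  same job. Rank 7 is attained by copying at \<open>v\<^sub>1\<close> and adding at \<open>v\<^sub>2, v\<^sub>3\<close>.
\<close>

section \<open>Rank of matrices indexed by finite sets\<close>

lemma (in vec_space) rank_less_ncols_if_kernel:
  assumes A: "A \<in> carrier_mat n nc"
    and v: "v \<in> carrier_vec nc" "v \<noteq> 0\<^sub>v nc" "A *\<^sub>v v = 0\<^sub>v n"
  shows "rank A < nc"
proof (rule ccontr)
  assume "\<not> rank A < nc"
  then have full: "rank A = nc" using rank_le_nc[OF A] by simp
  show False
  proof (cases "distinct (cols A)")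
    case True
    then show False using full_rank_lin_indpt[OF A full True] lin_depI[OF A v True] by blast
  next
    case False
    obtain S where S: "maximal S (\<lambda>T. T \<subseteq> set (cols A) \<and> lin_indpt T)"
      using maximal_exists[of "\<lambda>T. T \<subseteq> set (cols A) \<and> lin_indpt T" "card (set (cols A))" "{}"]
      by (meson List.finite_set card_mono empty_iff empty_subsetI finite_lin_indpt2 rev_finite_subset)
    then have "card S \<le> card (set (cols A))" by (simp add: card_mono maximal_def)
    also have "\<dots> < length (cols A)"
      using False card_distinct card_length le_neq_implies_less by blast
    finally have "card S < nc" using A by simp
    then show False using rank_card_indpt[OF A S] full by simp
  qed
qed

lemma (in vec_space) rank_ge_if_unit_submatrix:
  assumes A: "A \<in> carrier_mat n nc"
    and rows: "\<And>j. j < k \<Longrightarrow> \<rho> j < n" and cols: "\<And>j. j < k \<Longrightarrow> \<gamma> j < nc"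
    and unit: "\<And>j j'. j < k \<Longrightarrow> j' < k \<Longrightarrow> A $$ (\<rho> j, \<gamma> j') = (if j = j' then 1 else 0)"
  shows "k \<le> rank A"
proof -
  define B where "B = mat n k (\<lambda>(r, j). A $$ (r, \<gamma> j))"
  have B: "B \<in> carrier_mat n k" unfolding B_def by simp
  have B_unit: "B $$ (\<rho> j, j') = (if j = j' then 1 else 0)" if "j < k" "j' < k" for j j'
    using that rows unit by (simp add: B_def)
  have distinct: "distinct (cols B)"
  proof (rule distinct_conv_nth[THEN iffD2], intro allI impI)
    fix j j' assume "j < length (cols B)" "j' < length (cols B)" "j \<noteq> j'"
    then show "cols B ! j \<noteq> cols B ! j'"
      using B B_unit[of j j] B_unit[of j j'] rows[of j]
      by (metis cols_length cols_nth carrier_matD index_col zero_neq_one)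
  qed
  have indpt: "lin_indpt (set (cols B))"
  proof
    assume "lin_dep (set (cols B))"
    then obtain w where w: "w \<in> carrier_vec k" "w \<noteq> 0\<^sub>v k" "B *\<^sub>v w = 0\<^sub>v n"
      using lin_depE[OF B _ distinct] by blast
    then obtain j where j: "j < k" "w $ j \<noteq> 0" by (metis eq_vecI carrier_vecD index_zero_vec)
    have "(B *\<^sub>v w) $ \<rho> j = (\<Sum>j'\<in>{0..<k}. (if j = j' then 1 else 0) * w $ j')"
      using B w(1) j rows[of j] by (simp add: scalar_prod_def B_unit)
    also have "\<dots> = w $ j" using j by (simp add: if_distrib[of "\<lambda>x. x * _"] sum.delta cong: if_cong)
    finally show False using w(3) j rows[of j] by simp
  qed
  have "set (cols B) \<subseteq> set (cols A)"
  proof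
    fix x assume "x \<in> set (cols B)"
    then obtain j where j: "j < k" "x = col B j" using B by (auto simp: in_set_conv_nth)
    then have "x = col A (\<gamma> j)" using cols[of j] A by (intro eq_vecI) (auto simp: B_def)
    then show "x \<in> set (cols A)" using A cols[OF j(1)] by (simp add: cols_def)
  qed
  moreover have "card (set (cols B)) = k" using distinct_card[OF distinct] B by simp
  ultimately show ?thesis using rank_ge_card_indpt[OF A _ indpt] by simp
qed

lemma underdetermined_homogeneous_system:
  fixes a :: "nat \<Rightarrow> nat \<Rightarrow> 'a::field"
  assumes "n < m"
  shows "\<exists>x. (\<exists>j<m. x j \<noteq> 0) \<and> (\<forall>i<n. (\<Sum>j<m. a i j * x j) = 0)"
proof -
  define A where "A = mat\<^sub>r m m (\<lambda>i. if i = n then 0\<^sub>v m else vec m (\<lambda>j. if i < n then a i j else 0))"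
  have A: "A \<in> carrier_mat m m" unfolding A_def by simp
  have "det A = 0" unfolding A_def using assms by (intro det_row_0) auto
  then obtain v where v: "v \<in> carrier_vec m" "v \<noteq> 0\<^sub>v m" "A *\<^sub>v v = 0\<^sub>v m"
    using det_0_iff_vec_prod_zero_field[OF A] by blast
  have "\<exists>j<m. v $ j \<noteq> 0" using v(1,2) by (metis eq_vecI carrier_vecD index_zero_vec)
  moreover have "(\<Sum>j<m. a i j * v $ j) = 0" if "i < n" for i
  proof -
    have "(A *\<^sub>v v) $ i = 0" using v(3) that assms by simp
    then show ?thesis using that assms v(1) by (simp add: A_def scalar_prod_def atLeast0LessThan)
  qed
  ultimately show ?thesis by blast
qed

lemma enum_set:
  assumes "finite A"
  shows "set (enum_set A) = A" "distinct (enum_set A)"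
  using someI_ex[OF finite_distinct_list[OF assms]] unfolding enum_set_def by auto

lemma set_mat_rank_less_card:
  fixes M :: "'r \<Rightarrow> 'c \<Rightarrow> complex"
  assumes R: "finite R" and C: "finite C"
    and nonzero: "d \<in> C" "x d \<noteq> 0"
    and kernel: "\<And>r. r \<in> R \<Longrightarrow> (\<Sum>c\<in>C. M r c * x c) = 0"
  shows "set_mat_rank R C M < card C"
proof -
  define rs where "rs = enum_set R"
  define cs where "cs = enum_set C"
  note rs = enum_set[OF R, folded rs_def] and cs = enum_set[OF C, folded cs_def]
  have cs_bij: "bij_betw ((!) cs) {..<length cs} C" using cs by (intro bij_betw_nth) auto
  define A where "A = mat (length rs) (length cs) (\<lambda>(i, j). M (rs ! i) (cs ! j))"
  define v where "v = vec (length cs) (\<lambda>j. x (cs ! j))"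
  have A: "A \<in> carrier_mat (length rs) (length cs)" unfolding A_def by simp
  have v: "v \<in> carrier_vec (length cs)" unfolding v_def by simp
  have "v \<noteq> 0\<^sub>v (length cs)"
  proof
    assume "v = 0\<^sub>v (length cs)"
    moreover obtain j where "j < length cs" "cs ! j = d" using nonzero(1) cs(1) by (metis in_set_conv_nth)
    ultimately show False using nonzero(2) by (metis index_vec index_zero_vec(1) v_def)
  qed
  moreover have "A *\<^sub>v v = 0\<^sub>v (length rs)"
  proof (rule eq_vecI)
    fix i assume "i < dim_vec (0\<^sub>v (length rs))"
    then have i: "i < length rs" by simp
    have "(A *\<^sub>v v) $ i = (\<Sum>j<length cs. M (rs ! i) (cs ! j) * x (cs ! j))"
      using i by (simp add: A_def v_def scalar_prod_def atLeast0LessThan)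
    also have "\<dots> = (\<Sum>c\<in>C. M (rs ! i) c * x c)"
      by (rule sum.reindex_bij_betw[OF cs_bij])
    also have "\<dots> = 0" using kernel i rs(1) nth_mem by blast
    finally show "(A *\<^sub>v v) $ i = 0\<^sub>v (length rs) $ i" using i by simp
  qed (use A in simp)
  ultimately have "vec_space.rank (length rs) A < length cs"
    using vec_space.rank_less_ncols_if_kernel[OF A v] by blast
  then show ?thesis
    using distinct_card[OF cs(2)] cs(1)
    by (simp add: set_mat_rank_def Let_def A_def rs_def[symmetric] cs_def[symmetric])
qed

lemma set_mat_rank_ge_card:
  fixes M :: "'r \<Rightarrow> 'c \<Rightarrow> complex"
  assumes R: "finite R" and C: "finite C" and K: "finite K"
    and into: "\<rho> ` K \<subseteq> R" "\<gamma> ` K \<subseteq> C"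
    and unit: "\<And>x y. x \<in> K \<Longrightarrow> y \<in> K \<Longrightarrow> M (\<rho> x) (\<gamma> y) = (if x = y then 1 else 0)"
  shows "card K \<le> set_mat_rank R C M"
proof -
  define rs where "rs = enum_set R"
  define cs where "cs = enum_set C"
  define ks where "ks = enum_set K"
  note rs = enum_set[OF R, folded rs_def] and cs = enum_set[OF C, folded cs_def]
    and ks = enum_set[OF K, folded ks_def]
  have "\<forall>j\<in>{..<length ks}. \<exists>i. i < length rs \<and> rs ! i = \<rho> (ks ! j)"
    using into(1) rs(1) ks(1) by (auto simp: in_set_conv_nth[symmetric])
  then obtain ri where ri: "\<And>j. j < length ks \<Longrightarrow> ri j < length rs \<and> rs ! ri j = \<rho> (ks ! j)"
    by (metis bchoice lessThan_iff)
  have "\<forall>j\<in>{..<length ks}. \<exists>i. i < length cs \<and> cs ! i = \<gamma> (ks ! j)"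
    using into(2) cs(1) ks(1) by (auto simp: in_set_conv_nth[symmetric])
  then obtain ci where ci: "\<And>j. j < length ks \<Longrightarrow> ci j < length cs \<and> cs ! ci j = \<gamma> (ks ! j)"
    by (metis bchoice lessThan_iff)
  define A where "A = mat (length rs) (length cs) (\<lambda>(i, j). M (rs ! i) (cs ! j))"
  have A: "A \<in> carrier_mat (length rs) (length cs)" unfolding A_def by simp
  have "A $$ (ri j, ci j') = (if j = j' then 1 else 0)" if "j < length ks" "j' < length ks" for j j'
  proof -
    have "ks ! j \<in> K" "ks ! j' \<in> K" using that ks(1) nth_mem by blast+
    moreover have "ks ! j = ks ! j' \<longleftrightarrow> j = j'" using that ks(2) by (simp add: nth_eq_iff_index_eq)
    ultimately show ?thesis using that ri ci unit by (simp add: A_def)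
  qed
  then have "length ks \<le> vec_space.rank (length rs) A"
    using ri ci by (intro vec_space.rank_ge_if_unit_submatrix[OF A]) auto
  then show ?thesis
    using distinct_card[OF ks(2)] ks(1)
    by (simp add: set_mat_rank_def Let_def A_def rs_def[symmetric] cs_def[symmetric])
qed

section \<open>Pencils of \<open>2 \<times> 2\<close> matrices\<close>

lemma sum_lessThan_2: "(\<Sum>i<(2::nat). f i) = f 0 + f 1"
  by (simp add: numeral_2_eq_2)

definition nonzero2 :: "(nat \<Rightarrow> complex) \<Rightarrow> bool" where
  "nonzero2 p \<longleftrightarrow> p 0 \<noteq> 0 \<or> p 1 \<noteq> 0"

definition vec2 :: "complex \<Rightarrow> complex \<Rightarrow> nat \<Rightarrow> complex" where
  "vec2 x y = (\<lambda>i. if i = 0 then x else y)"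

lemma vec2_simps [simp]: "vec2 x y 0 = x" "vec2 x y 1 = y" "vec2 x y (Suc 0) = y"
  by (simp_all add: vec2_def)

definition wedge2 :: "(nat \<Rightarrow> complex) \<Rightarrow> (nat \<Rightarrow> complex) \<Rightarrow> complex" where
  "wedge2 p q = p 0 * q 1 - p 1 * q 0"

definition det2 :: "(nat \<Rightarrow> nat \<Rightarrow> complex) \<Rightarrow> complex" where
  "det2 M = M 0 0 * M 1 1 - M 0 1 * M 1 0"

definition mixed_det2 :: "(nat \<Rightarrow> nat \<Rightarrow> complex) \<Rightarrow> (nat \<Rightarrow> nat \<Rightarrow> complex) \<Rightarrow> complex" where
  "mixed_det2 M N = M 0 0 * N 1 1 + M 1 1 * N 0 0 - M 0 1 * N 1 0 - M 1 0 * N 0 1"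

lemma det2_add:
  "det2 (\<lambda>a b. M a b + s * N a b) = det2 M + s * mixed_det2 N M + s\<^sup>2 * det2 N"
  by (simp add: det2_def mixed_det2_def power2_eq_square algebra_simps)

lemma nonzero2_if_wedge2: "wedge2 p q \<noteq> 0 \<Longrightarrow> nonzero2 p" "wedge2 p q \<noteq> 0 \<Longrightarrow> nonzero2 q"
  by (auto simp: wedge2_def nonzero2_def)

lemma nonzero2_E:
  assumes "nonzero2 p" obtains i where "i < 2" "p i \<noteq> 0"
  using assms less_2_cases_iff by (auto simp: nonzero2_def)

lemma coeff_zero_if_wedge2:
  fixes c d :: complex
  assumes "c * u 0 + d * w 0 = 0" "c * u 1 + d * w 1 = 0" "wedge2 u w \<noteq> 0"
  shows "c = 0"
proof -
  have "c * wedge2 u w = w 1 * (c * u 0 + d * w 0) - w 0 * (c * u 1 + d * w 1)"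
    by (simp add: wedge2_def algebra_simps)
  then show ?thesis using assms by simp
qed

lemma complex_quadratic_root:
  fixes a b c :: complex
  assumes "a \<noteq> 0"
  shows "\<exists>t. a * t\<^sup>2 + b * t + c = 0"
proof -
  define d where "d = csqrt (b\<^sup>2 - 4 * a * c)"
  have "a * ((d - b) / (2 * a))\<^sup>2 + b * ((d - b) / (2 * a)) + c = (d\<^sup>2 - b\<^sup>2 + 4 * a * c) / (4 * a)"
    using assms by (simp add: field_simps power2_eq_square)
  also have "\<dots> = 0" by (simp add: d_def)
  finally show ?thesis by blast
qed

lemma rank_one_factorization:
  assumes "det2 M = 0" "\<not> (\<forall>a<2. \<forall>b<2. M a b = 0)"
  shows "\<exists>\<alpha> \<gamma>. nonzero2 \<alpha> \<and> nonzero2 \<gamma> \<and> (\<forall>a<2. \<forall>b<2. M a b = \<alpha> a * \<gamma> b)"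
proof -
  have det: "M 0 0 * M 1 1 = M 0 1 * M 1 0" using assms(1) by (simp add: det2_def)
  consider "M 0 0 \<noteq> 0" | "M 0 0 = 0" "M 0 1 \<noteq> 0" | "M 0 0 = 0" "M 0 1 = 0"
    by blast
  then show ?thesis
  proof cases
    case 1
    show ?thesis
      by (rule exI[of _ "vec2 1 (M 1 0 / M 0 0)"], rule exI[of _ "vec2 (M 0 0) (M 0 1)"])
        (use 1 det in \<open>auto simp: less_2_cases_iff nonzero2_def field_simps\<close>)
  next
    case 2
    show ?thesis
      by (rule exI[of _ "vec2 1 (M 1 1 / M 0 1)"], rule exI[of _ "vec2 (M 0 0) (M 0 1)"])
        (use 2 det in \<open>auto simp: less_2_cases_iff nonzero2_def field_simps\<close>)
  next
    case 3
    show ?thesis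
      by (rule exI[of _ "vec2 0 1"], rule exI[of _ "vec2 (M 1 0) (M 1 1)"])
        (use 3 assms(2) in \<open>auto simp: less_2_cases_iff nonzero2_def\<close>)
  qed
qed

lemma rank_two_decomposition:
  assumes "nonzero2 \<alpha>" "nonzero2 \<gamma>" and mixed: "mixed_det2 (\<lambda>a b. \<alpha> a * \<gamma> b) M = 0"
  shows "\<exists>g h. \<forall>a<2. \<forall>b<2. M a b = \<alpha> a * g b + h a * \<gamma> b"
proof -
  have lam: "\<alpha> 1 * \<gamma> 1 * M 0 0 - \<alpha> 1 * \<gamma> 0 * M 0 1 - \<alpha> 0 * \<gamma> 1 * M 1 0 + \<alpha> 0 * \<gamma> 0 * M 1 1 = 0"
    using mixed by (simp add: mixed_det2_def algebra_simps)
  consider "\<alpha> 0 \<noteq> 0" "\<gamma> 0 \<noteq> 0" | "\<alpha> 0 \<noteq> 0" "\<gamma> 1 \<noteq> 0" | "\<alpha> 1 \<noteq> 0" "\<gamma> 0 \<noteq> 0" | "\<alpha> 1 \<noteq> 0" "\<gamma> 1 \<noteq> 0"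
    using assms(1,2) unfolding nonzero2_def by blast
  then show ?thesis
  proof cases
    case 1
    have e: "M 1 1 = (- \<alpha> 1 * \<gamma> 1 * M 0 0 + \<alpha> 1 * \<gamma> 0 * M 0 1 + \<alpha> 0 * \<gamma> 1 * M 1 0) / (\<alpha> 0 * \<gamma> 0)"
      using 1 lam by (simp add: field_simps; simp add: algebra_simps)
    show ?thesis
      by (rule exI[of _ "vec2 (M 0 0 / \<alpha> 0) (M 0 1 / \<alpha> 0)"],
          rule exI[of _ "vec2 0 ((M 1 0 - \<alpha> 1 * M 0 0 / \<alpha> 0) / \<gamma> 0)"])
        (use 1 in \<open>simp add: less_2_cases_iff e e[unfolded One_nat_def] field_simps;
          simp add: algebra_simps\<close>)
  next
    case 2
    have e: "M 1 0 = (\<alpha> 1 * \<gamma> 1 * M 0 0 - \<alpha> 1 * \<gamma> 0 * M 0 1 + \<alpha> 0 * \<gamma> 0 * M 1 1) / (\<alpha> 0 * \<gamma> 1)"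
      using 2 lam by (simp add: field_simps; simp add: algebra_simps)
    show ?thesis
      by (rule exI[of _ "vec2 (M 0 0 / \<alpha> 0) (M 0 1 / \<alpha> 0)"],
          rule exI[of _ "vec2 0 ((M 1 1 - \<alpha> 1 * M 0 1 / \<alpha> 0) / \<gamma> 1)"])
        (use 2 in \<open>simp add: less_2_cases_iff e e[unfolded One_nat_def] field_simps;
          simp add: algebra_simps\<close>)
  next
    case 3
    have e: "M 0 1 = (\<alpha> 1 * \<gamma> 1 * M 0 0 - \<alpha> 0 * \<gamma> 1 * M 1 0 + \<alpha> 0 * \<gamma> 0 * M 1 1) / (\<alpha> 1 * \<gamma> 0)"
      using 3 lam by (simp add: field_simps; simp add: algebra_simps)
    show ?thesis
      by (rule exI[of _ "vec2 (M 1 0 / \<alpha> 1) (M 1 1 / \<alpha> 1)"],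
          rule exI[of _ "vec2 ((M 0 0 - \<alpha> 0 * M 1 0 / \<alpha> 1) / \<gamma> 0) 0"])
        (use 3 in \<open>simp add: less_2_cases_iff e e[unfolded One_nat_def] field_simps;
          simp add: algebra_simps\<close>)
  next
    case 4
    have e: "M 0 0 = (\<alpha> 1 * \<gamma> 0 * M 0 1 + \<alpha> 0 * \<gamma> 1 * M 1 0 - \<alpha> 0 * \<gamma> 0 * M 1 1) / (\<alpha> 1 * \<gamma> 1)"
      using 4 lam by (simp add: field_simps; simp add: algebra_simps)
    show ?thesis
      by (rule exI[of _ "vec2 (M 1 0 / \<alpha> 1) (M 1 1 / \<alpha> 1)"],
          rule exI[of _ "vec2 ((M 0 1 - \<alpha> 0 * M 1 1 / \<alpha> 1) / \<gamma> 1) 0"])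
        (use 4 in \<open>simp add: less_2_cases_iff e e[unfolded One_nat_def] field_simps;
          simp add: algebra_simps\<close>)
  qed
qed

section \<open>Contracting three 3-tensors along a path\<close>

type_synonym array3 = "nat \<Rightarrow> nat \<Rightarrow> nat \<Rightarrow> complex"

definition pencil :: "array3 \<Rightarrow> (nat \<Rightarrow> complex) \<Rightarrow> nat \<Rightarrow> nat \<Rightarrow> complex" where
  "pencil T y a b = y 0 * T 0 a b + y 1 * T 1 a b"

definition leg :: "array3 \<Rightarrow> (nat \<Rightarrow> complex) \<Rightarrow> (nat \<Rightarrow> complex) \<Rightarrow> nat \<Rightarrow> complex" where
  "leg A \<alpha> p t = (\<Sum>a<2. \<Sum>i<2. \<alpha> a * A a i t * p i)"

text \<open>\<open>T j a b\<close> is the tensor at \<open>v\<^sub>1\<close> (legs to \<open>s\<^sub>2, v\<^sub>2, v\<^sub>3\<close>), \<open>A a i u\<close> the one at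
  \<open>v\<^sub>2\<close> (legs to \<open>v\<^sub>1, s\<^sub>1, t\<^sub>1\<close>) and \<open>B b k u\<close> the one at \<open>v\<^sub>3\<close> (legs to
  \<open>v\<^sub>1, s\<^sub>3, t\<^sub>2\<close>); \<open>X i j k\<close> is an input vector indexed by \<open>s\<^sub>1, s\<^sub>2, s\<^sub>3\<close>.\<close>
definition net_map :: "array3 \<Rightarrow> array3 \<Rightarrow> array3 \<Rightarrow> array3 \<Rightarrow> nat \<Rightarrow> nat \<Rightarrow> complex" where
  "net_map T A B X u1 u2 =
     (\<Sum>i<2. \<Sum>j<2. \<Sum>k<2. (\<Sum>a<2. \<Sum>b<2. T j a b * A a i u1 * B b k u2) * X i j k)"

definition singular_net :: "array3 \<Rightarrow> array3 \<Rightarrow> array3 \<Rightarrow> bool" where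
  "singular_net T A B \<longleftrightarrow>
     (\<exists>X. (\<exists>i<2. \<exists>j<2. \<exists>k<2. X i j k \<noteq> 0) \<and> (\<forall>u1<3. \<forall>u2<3. net_map T A B X u1 u2 = 0))"

definition tprod3 :: "(nat \<Rightarrow> complex) \<Rightarrow> (nat \<Rightarrow> complex) \<Rightarrow> (nat \<Rightarrow> complex) \<Rightarrow> array3" where
  "tprod3 p y r i j k = p i * y j * r k"

lemma tprod3_nonzero:
  assumes "nonzero2 p" "nonzero2 y" "nonzero2 r"
  shows "\<exists>i<2. \<exists>j<2. \<exists>k<2. tprod3 p y r i j k \<noteq> 0"
proof -
  obtain i j k where "i < 2" "p i \<noteq> 0" "j < 2" "y j \<noteq> 0" "k < 2" "r k \<noteq> 0"
    using assms by (metis nonzero2_E)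
  then show ?thesis by (auto simp: tprod3_def)
qed

lemma leg_zero_vector: "\<not> nonzero2 p \<Longrightarrow> leg A \<alpha> p t = 0"
  by (simp add: nonzero2_def leg_def sum_lessThan_2)

lemma leg_zero_weight: "leg A (\<lambda>_. 0) p t = 0"
  by (simp add: leg_def)

lemma net_map_add:
  "net_map T A B (\<lambda>i j k. X i j k + Y i j k) u1 u2 = net_map T A B X u1 u2 + net_map T A B Y u1 u2"
  unfolding net_map_def by (simp add: distrib_left sum.distrib)

lemma net_map_diff:
  "net_map T A B (\<lambda>i j k. X i j k - Y i j k) u1 u2 = net_map T A B X u1 u2 - net_map T A B Y u1 u2"
  unfolding net_map_def by (simp add: right_diff_distrib sum_subtractf)

lemma net_map_tprod3:
  assumes "\<forall>a<2. \<forall>b<2. pencil T y a b = \<alpha> a * g b + h a * \<gamma> b"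
  shows "net_map T A B (tprod3 p y r) u1 u2
    = leg A \<alpha> p u1 * leg B g r u2 + leg A h p u1 * leg B \<gamma> r u2"
proof -
  have "net_map T A B (tprod3 p y r) u1 u2 =
      (\<Sum>a<2. \<Sum>b<2. pencil T y a b * (\<Sum>i<2. A a i u1 * p i) * (\<Sum>k<2. B b k u2 * r k))"
    unfolding net_map_def tprod3_def pencil_def sum_lessThan_2 by (simp add: algebra_simps)
  then show ?thesis
    using assms unfolding leg_def less_2_cases_iff sum_lessThan_2 by (simp add: algebra_simps)
qed

lemma net_map_tprod3_rank_one:
  assumes "\<forall>a<2. \<forall>b<2. pencil T y a b = \<alpha> a * \<gamma> b"
  shows "net_map T A B (tprod3 p y r) u1 u2 = leg A \<alpha> p u1 * leg B \<gamma> r u2"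
  using net_map_tprod3[of T y \<alpha> \<gamma> "\<lambda>_. 0"] assms by (simp add: leg_zero_weight)

lemma leg_relation:
  "\<exists>p q. (nonzero2 p \<or> nonzero2 q) \<and> (\<forall>t<3. leg A \<alpha> p t + leg A \<beta> q t = 0)"
proof -
  define c where "c t j = (if j < 2 then \<Sum>a<2. \<alpha> a * A a j t else \<Sum>a<2. \<beta> a * A a (j - 2) t)" for t j
  obtain x where x: "\<exists>j<4. x j \<noteq> 0" "\<forall>t<3. (\<Sum>j<4. c t j * x j) = 0"
    using underdetermined_homogeneous_system[of 3 4 c] by auto
  define p where "p = vec2 (x 0) (x 1)"
  define q where "q = vec2 (x 2) (x 3)"
  have "nonzero2 p \<or> nonzero2 q"
    using x(1) by (auto simp: nonzero2_def p_def q_def eval_nat_numeral less_Suc_eq)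
  moreover have "leg A \<alpha> p t + leg A \<beta> q t = (\<Sum>j<4. c t j * x j)" for t
    by (simp add: leg_def c_def p_def q_def eval_nat_numeral algebra_simps)
  ultimately show ?thesis using x(2) by metis
qed

lemma singular_net_if_left_leg_vanishes:
  assumes "nonzero2 y" "\<forall>a<2. \<forall>b<2. pencil T y a b = \<alpha> a * \<gamma> b"
    and "nonzero2 p" "\<forall>t<3. leg A \<alpha> p t = 0"
  shows "singular_net T A B"
  unfolding singular_net_def
proof (intro exI[of _ "tprod3 p y (vec2 1 0)"] conjI)
  show "\<exists>i<2. \<exists>j<2. \<exists>k<2. tprod3 p y (vec2 1 0) i j k \<noteq> 0"
    using assms by (intro tprod3_nonzero) (auto simp: nonzero2_def)
  show "\<forall>u1<3. \<forall>u2<3. net_map T A B (tprod3 p y (vec2 1 0)) u1 u2 = 0"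
    using assms(4) by (simp add: net_map_tprod3_rank_one[OF assms(2)])
qed

lemma singular_net_if_right_leg_vanishes:
  assumes "nonzero2 y" "\<forall>a<2. \<forall>b<2. pencil T y a b = \<alpha> a * \<gamma> b"
    and "nonzero2 r" "\<forall>t<3. leg B \<gamma> r t = 0"
  shows "singular_net T A B"
  unfolding singular_net_def
proof (intro exI[of _ "tprod3 (vec2 1 0) y r"] conjI)
  show "\<exists>i<2. \<exists>j<2. \<exists>k<2. tprod3 (vec2 1 0) y r i j k \<noteq> 0"
    using assms by (intro tprod3_nonzero) (auto simp: nonzero2_def)
  show "\<forall>u1<3. \<forall>u2<3. net_map T A B (tprod3 (vec2 1 0) y r) u1 u2 = 0"
    using assms(4) by (simp add: net_map_tprod3_rank_one[OF assms(2)])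
qed

lemma singular_net_if_pencil_degenerate:
  assumes "nonzero2 y" "\<forall>a<2. \<forall>b<2. pencil T y a b = 0"
  shows "singular_net T A B"
  using assms
  by (intro singular_net_if_left_leg_vanishes[where \<alpha> = "\<lambda>_. 0" and \<gamma> = "\<lambda>_. 0" and p = "vec2 1 0"])
    (auto simp: nonzero2_def leg_zero_weight)

lemma singular_net_if_two_rank_one_members:
  assumes y: "wedge2 y1 y2 \<noteq> 0"
    and T1: "\<forall>a<2. \<forall>b<2. pencil T y1 a b = \<alpha>1 a * \<gamma>1 b"
    and T2: "\<forall>a<2. \<forall>b<2. pencil T y2 a b = \<alpha>2 a * \<gamma>2 b"
  shows "singular_net T A B"
proof -
  obtain p q where pq: "nonzero2 p \<or> nonzero2 q" "\<forall>t<3. leg A \<alpha>1 p t + leg A \<alpha>2 q t = 0"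
    using leg_relation by blast
  obtain r s where rs: "nonzero2 r \<or> nonzero2 s" "\<forall>t<3. leg B \<gamma>1 r t + leg B \<gamma>2 s t = 0"
    using leg_relation by blast
  consider "\<not> nonzero2 p" | "\<not> nonzero2 r" | "nonzero2 p" "nonzero2 r" by blast
  then show ?thesis
  proof cases
    case 1
    then show ?thesis using pq nonzero2_if_wedge2(2)[OF y]
      by (intro singular_net_if_left_leg_vanishes[OF _ T2, of q]) (auto simp: leg_zero_vector)
  next
    case 2
    then show ?thesis using rs nonzero2_if_wedge2(2)[OF y]
      by (intro singular_net_if_right_leg_vanishes[OF _ T2, of s]) (auto simp: leg_zero_vector)
  next
    case 3
    obtain i where i: "i < 2" "p i \<noteq> 0" using 3(1) by (rule nonzero2_E)
    obtain k where k: "k < 2" "r k \<noteq> 0" using 3(2) by (rule nonzero2_E)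
    let ?X = "\<lambda>i j k. tprod3 p y1 r i j k - tprod3 q y2 s i j k"
    have "\<exists>j<2. ?X i j k \<noteq> 0"
    proof (rule ccontr)
      assume "\<not> ?thesis"
      then have "?X i 0 k = 0" "?X i 1 k = 0" by auto
      then have "(p i * r k) * y1 0 + (- (q i * s k)) * y2 0 = 0"
        "(p i * r k) * y1 1 + (- (q i * s k)) * y2 1 = 0"
        by (simp_all add: tprod3_def algebra_simps)
      from coeff_zero_if_wedge2[OF this y] i k show False by simp
    qed
    moreover have "net_map T A B ?X u1 u2 = 0" if "u1 < 3" "u2 < 3" for u1 u2
    proof -
      have "leg A \<alpha>1 p u1 = - leg A \<alpha>2 q u1" "leg B \<gamma>1 r u2 = - leg B \<gamma>2 s u2"
        using pq(2) rs(2) that by (simp_all add: eq_neg_iff_add_eq_0)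
      then show ?thesis
        by (simp add: net_map_diff net_map_tprod3_rank_one[OF T1] net_map_tprod3_rank_one[OF T2])
    qed
    ultimately show ?thesis
      unfolding singular_net_def using i(1) k(1) by (intro exI[of _ ?X]) blast
  qed
qed

text \<open>If the pencil has a single rank-one direction \<open>y\<^sub>1\<close>, tangency gives
  \<open>T y\<^sub>2 = \<alpha> \<otimes> g + h \<otimes> \<gamma>\<close>, and the kernel element is
  \<open>q \<otimes> y\<^sub>2 \<otimes> r + q \<otimes> y\<^sub>1 \<otimes> s + p \<otimes> y\<^sub>1 \<otimes> r\<close>.\<close>
lemma singular_net_if_rank_one_tangent:
  assumes y: "wedge2 y1 y2 \<noteq> 0"
    and T1: "\<forall>a<2. \<forall>b<2. pencil T y1 a b = \<alpha> a * \<gamma> b"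
    and T2: "\<forall>a<2. \<forall>b<2. pencil T y2 a b = \<alpha> a * g b + h a * \<gamma> b"
  shows "singular_net T A B"
proof -
  obtain p q where pq: "nonzero2 p \<or> nonzero2 q" "\<forall>t<3. leg A \<alpha> p t + leg A h q t = 0"
    using leg_relation by blast
  obtain r s where rs: "nonzero2 r \<or> nonzero2 s" "\<forall>t<3. leg B g r t + leg B \<gamma> s t = 0"
    using leg_relation by blast
  consider "\<not> nonzero2 q" | "\<not> nonzero2 r" | "nonzero2 q" "nonzero2 r" by blast
  then show ?thesis
  proof cases
    case 1
    then show ?thesis using pq nonzero2_if_wedge2(1)[OF y]
      by (intro singular_net_if_left_leg_vanishes[OF _ T1, of p]) (auto simp: leg_zero_vector)
  next
    case 2
    then show ?thesis using rs nonzero2_if_wedge2(1)[OF y]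
      by (intro singular_net_if_right_leg_vanishes[OF _ T1, of s]) (auto simp: leg_zero_vector)
  next
    case 3
    obtain i where i: "i < 2" "q i \<noteq> 0" using 3(1) by (rule nonzero2_E)
    obtain k where k: "k < 2" "r k \<noteq> 0" using 3(2) by (rule nonzero2_E)
    let ?X = "\<lambda>i j k. tprod3 q y2 r i j k + (tprod3 q y1 s i j k + tprod3 p y1 r i j k)"
    have "\<exists>j<2. ?X i j k \<noteq> 0"
    proof (rule ccontr)
      assume "\<not> ?thesis"
      then have "?X i 0 k = 0" "?X i 1 k = 0" by auto
      then have "(q i * r k) * y2 0 + (q i * s k + p i * r k) * y1 0 = 0"
        "(q i * r k) * y2 1 + (q i * s k + p i * r k) * y1 1 = 0"
        by (simp_all add: tprod3_def algebra_simps)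
      moreover have "wedge2 y2 y1 \<noteq> 0" using y by (simp add: wedge2_def algebra_simps)
      ultimately have "q i * r k = 0" by (rule coeff_zero_if_wedge2)
      with i k show False by simp
    qed
    moreover have "net_map T A B ?X u1 u2 = 0" if "u1 < 3" "u2 < 3" for u1 u2
    proof -
      have "leg A h q u1 = - leg A \<alpha> p u1" "leg B g r u2 = - leg B \<gamma> s u2"
        using pq(2) rs(2) that by (simp_all add: eq_neg_iff_add_eq_0 add.commute)
      then show ?thesis
        unfolding net_map_add net_map_tprod3_rank_one[OF T1] net_map_tprod3[OF T2]
        by (simp add: algebra_simps)
    qed
    ultimately show ?thesis
      unfolding singular_net_def using i(1) k(1) by (intro exI[of _ ?X]) blast
  qed
qed

lemma pencil_singular_member: "\<exists>y. nonzero2 y \<and> det2 (pencil T y) = 0"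
proof (cases "det2 (T 0) = 0")
  case True
  then show ?thesis by (intro exI[of _ "vec2 1 0"]) (simp add: nonzero2_def pencil_def det2_def)
next
  case False
  obtain t where "det2 (T 0) * t\<^sup>2 + mixed_det2 (T 0) (T 1) * t + det2 (T 1) = 0"
    using complex_quadratic_root[OF False] by blast
  moreover have
    "det2 (pencil T (vec2 t 1)) = det2 (T 0) * t\<^sup>2 + mixed_det2 (T 0) (T 1) * t + det2 (T 1)"
    by (simp add: pencil_def det2_def mixed_det2_def power2_eq_square algebra_simps)
  ultimately show ?thesis by (intro exI[of _ "vec2 t 1"]) (simp add: nonzero2_def)
qed

text \<open>Along \<open>y\<^sub>2 + s y\<^sub>1\<close> the determinant of the pencil is affine in \<open>s\<close>, with slope the
  mixed determinant; it either has a second zero or vanishes to first order.\<close>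
lemma singular_net_if_rank_one_member:
  assumes y: "wedge2 y1 y2 \<noteq> 0" and "nonzero2 \<alpha>" "nonzero2 \<gamma>"
    and T1: "\<forall>a<2. \<forall>b<2. pencil T y1 a b = \<alpha> a * \<gamma> b"
  shows "singular_net T A B"
proof -
  define M where "M = pencil T y2"
  define \<mu> where "\<mu> = mixed_det2 (\<lambda>a b. \<alpha> a * \<gamma> b) M"
  show ?thesis
  proof (cases "\<mu> = 0")
    case True
    then obtain g h where "\<forall>a<2. \<forall>b<2. M a b = \<alpha> a * g b + h a * \<gamma> b"
      using rank_two_decomposition[OF assms(2,3)] unfolding \<mu>_def by blast
    then show ?thesis using singular_net_if_rank_one_tangent[OF y T1] unfolding M_def by blast
  next
    case False
    define s where "s = - det2 M / \<mu>"
    define y3 where "y3 i = y2 i + s * y1 i" for i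
    have y3: "wedge2 y1 y3 \<noteq> 0" using y by (simp add: y3_def wedge2_def algebra_simps)
    have "pencil T y3 = (\<lambda>a b. M a b + s * pencil T y1 a b)"
      by (simp add: pencil_def y3_def M_def fun_eq_iff algebra_simps)
    moreover have "det2 (pencil T y1) = 0" "mixed_det2 (pencil T y1) M = \<mu>"
      using T1 by (simp_all add: det2_def mixed_det2_def \<mu>_def)
    ultimately have "det2 (pencil T y3) = det2 M + s * \<mu>" by (simp add: det2_add)
    then have "det2 (pencil T y3) = 0" using False by (simp add: s_def)
    show ?thesis
    proof (cases "\<forall>a<2. \<forall>b<2. pencil T y3 a b = 0")
      case True
      then show ?thesis using singular_net_if_pencil_degenerate nonzero2_if_wedge2(2)[OF y3] by blast
    next
      case False
      then obtain \<alpha>3 \<gamma>3 where "\<forall>a<2. \<forall>b<2. pencil T y3 a b = \<alpha>3 a * \<gamma>3 b"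
        using rank_one_factorization \<open>det2 (pencil T y3) = 0\<close> by blast
      then show ?thesis using singular_net_if_two_rank_one_members[OF y3 T1] by blast
    qed
  qed
qed

theorem singular_net_always: "singular_net T A B"
proof -
  obtain y1 where y1: "nonzero2 y1" "det2 (pencil T y1) = 0"
    using pencil_singular_member by blast
  show ?thesis
  proof (cases "\<forall>a<2. \<forall>b<2. pencil T y1 a b = 0")
    case True
    then show ?thesis using singular_net_if_pencil_degenerate[OF y1(1)] by blast
  next
    case False
    then obtain \<alpha> \<gamma> where "nonzero2 \<alpha>" "nonzero2 \<gamma>"
      and "\<forall>a<2. \<forall>b<2. pencil T y1 a b = \<alpha> a * \<gamma> b"
      using rank_one_factorization[OF y1(2)] by blast
    moreover have "wedge2 y1 (if y1 0 = 0 then vec2 1 0 else vec2 0 1) \<noteq> 0"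
      using y1(1) by (simp add: wedge2_def nonzero2_def)
    ultimately show ?thesis using singular_net_if_rank_one_member by blast
  qed
qed

section \<open>The template\<close>

lemma edge_UNIV: "(UNIV :: edge set) = {e_s2v1, e_v1v2, e_v1v3, e_s1v2, e_v2t1, e_s3v3, e_v3t2}"
  using edge.exhaust by auto

lemma ex_incident:
  "incident ex_E ex_ends s1 = {e_s1v2}" "incident ex_E ex_ends s2 = {e_s2v1}"
  "incident ex_E ex_ends s3 = {e_s3v3}" "incident ex_E ex_ends t1 = {e_v2t1}"
  "incident ex_E ex_ends t2 = {e_v3t2}"
  "incident ex_E ex_ends v1 = {e_s2v1, e_v1v2, e_v1v3}"
  "incident ex_E ex_ends v2 = {e_v1v2, e_s1v2, e_v2t1}"
  "incident ex_E ex_ends v3 = {e_v1v3, e_s3v3, e_v3t2}"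
  by (auto simp: incident_def ex_E_def edge_UNIV)

lemma ex_input_edges: "end_edges ex_E ex_ends ex_S = {e_s1v2, e_s2v1, e_s3v3}"
  by (auto simp: end_edges_def ex_S_def ex_incident)

lemma ex_output_edges: "end_edges ex_E ex_ends ex_T = {e_v2t1, e_v3t2}"
  by (auto simp: end_edges_def ex_T_def ex_incident)

abbreviation ex_inputs :: "(edge \<Rightarrow> nat) set" where
  "ex_inputs \<equiv> assignments {e_s1v2, e_s2v1, e_s3v3} ex_cap"

abbreviation ex_outputs :: "(edge \<Rightarrow> nat) set" where
  "ex_outputs \<equiv> assignments {e_v2t1, e_v3t2} ex_cap"

definition input_index :: "nat \<Rightarrow> nat \<Rightarrow> nat \<Rightarrow> edge \<Rightarrow> nat" where
  "input_index i j k =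
     (\<lambda>e. if e = e_s1v2 then i else if e = e_s2v1 then j else if e = e_s3v3 then k else undefined)"

definition output_index :: "nat \<Rightarrow> nat \<Rightarrow> edge \<Rightarrow> nat" where
  "output_index u1 u2 = (\<lambda>e. if e = e_v2t1 then u1 else if e = e_v3t2 then u2 else undefined)"

lemma input_index_apply [simp]:
  "input_index i j k e_s1v2 = i" "input_index i j k e_s2v1 = j" "input_index i j k e_s3v3 = k"
  by (simp_all add: input_index_def)

lemma ex_inputs_eq: "ex_inputs = (\<lambda>(i, j, k). input_index i j k) ` ({..<2} \<times> {..<2} \<times> {..<2})"
proof (intro equalityI subsetI)
  fix f assume f: "f \<in> ex_inputs"
  then have "f = input_index (f e_s1v2) (f e_s2v1) (f e_s3v3)"
    by (intro ext) (auto simp: assignments_def input_index_def PiE_def extensional_def)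
  moreover have "f e_s1v2 < 2" "f e_s2v1 < 2" "f e_s3v3 < 2"
    using f by (auto simp: assignments_def PiE_def)
  ultimately show "f \<in> (\<lambda>(i, j, k). input_index i j k) ` ({..<2} \<times> {..<2} \<times> {..<2})" by force
next
  fix f assume "f \<in> (\<lambda>(i, j, k). input_index i j k) ` ({..<2} \<times> {..<2} \<times> {..<2})"
  then show "f \<in> ex_inputs" by (auto simp: assignments_def input_index_def PiE_def extensional_def)
qed

lemma ex_outputs_eq: "ex_outputs = (\<lambda>(u1, u2). output_index u1 u2) ` ({..<3} \<times> {..<3})"
proof (intro equalityI subsetI)
  fix f assume f: "f \<in> ex_outputs"
  then have "f = output_index (f e_v2t1) (f e_v3t2)"
    by (intro ext) (auto simp: assignments_def output_index_def PiE_def extensional_def)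
  moreover have "f e_v2t1 < 3" "f e_v3t2 < 3" using f by (auto simp: assignments_def PiE_def)
  ultimately show "f \<in> (\<lambda>(u1, u2). output_index u1 u2) ` ({..<3} \<times> {..<3})" by force
next
  fix f assume "f \<in> (\<lambda>(u1, u2). output_index u1 u2) ` ({..<3} \<times> {..<3})"
  then show "f \<in> ex_outputs" by (auto simp: assignments_def output_index_def PiE_def extensional_def)
qed

lemma input_index_mem: "i < 2 \<Longrightarrow> j < 2 \<Longrightarrow> k < 2 \<Longrightarrow> input_index i j k \<in> ex_inputs"
  unfolding ex_inputs_eq by (rule image_eqI[of _ _ "(i, j, k)"]) auto

lemma output_index_mem: "u1 < 3 \<Longrightarrow> u2 < 3 \<Longrightarrow> output_index u1 u2 \<in> ex_outputs"
  unfolding ex_outputs_eq by (rule image_eqI[of _ _ "(u1, u2)"]) auto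

lemma sum_ex_inputs: "sum F ex_inputs = (\<Sum>i<2. \<Sum>j<2. \<Sum>k<2. F (input_index i j k))"
proof -
  have "inj_on (\<lambda>(i, j, k). input_index i j k) X" for X
    by (rule inj_onI) (clarsimp, metis input_index_apply)
  then show ?thesis unfolding ex_inputs_eq by (simp add: sum.reindex sum.cartesian_product')
qed

lemma finite_ex_assignments: "finite ex_inputs" "finite ex_outputs"
  by (simp_all add: assignments_def finite_PiE)

lemma card_ex_inputs: "card ex_inputs = 8"
  by (simp add: assignments_def card_PiE)

definition edge_index :: "nat \<Rightarrow> nat \<Rightarrow> nat \<Rightarrow> nat \<Rightarrow> nat \<Rightarrow> nat \<Rightarrow> nat \<Rightarrow> edge \<Rightarrow> nat" where
  "edge_index i j k u1 u2 a b = (\<lambda>e. case e of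
       e_s1v2 \<Rightarrow> i | e_s2v1 \<Rightarrow> j | e_s3v3 \<Rightarrow> k | e_v2t1 \<Rightarrow> u1 | e_v3t2 \<Rightarrow> u2
     | e_v1v2 \<Rightarrow> a | e_v1v3 \<Rightarrow> b)"

lemma ex_boundary_assignments:
  assumes "i < 2" "j < 2" "k < 2" "u1 < 3" "u2 < 3"
  shows "{W \<in> assignments ex_E ex_cap. restrict W {e_s1v2, e_s2v1, e_s3v3} = input_index i j k
            \<and> restrict W {e_v2t1, e_v3t2} = output_index u1 u2}
        = (\<lambda>(a, b). edge_index i j k u1 u2 a b) ` ({..<2} \<times> {..<2})"
proof (intro equalityI subsetI)
  fix W
  assume "W \<in> {W \<in> assignments ex_E ex_cap.
      restrict W {e_s1v2, e_s2v1, e_s3v3} = input_index i j k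
      \<and> restrict W {e_v2t1, e_v3t2} = output_index u1 u2}"
  then have W: "W \<in> assignments ex_E ex_cap"
    and inputs: "restrict W {e_s1v2, e_s2v1, e_s3v3} = input_index i j k"
    and outputs: "restrict W {e_v2t1, e_v3t2} = output_index u1 u2" by auto
  have "W e_s1v2 = i" "W e_s2v1 = j" "W e_s3v3 = k"
    using fun_cong[OF inputs, of e_s1v2] fun_cong[OF inputs, of e_s2v1]
      fun_cong[OF inputs, of e_s3v3]
    by simp_all
  moreover have "W e_v2t1 = u1" "W e_v3t2 = u2"
    using fun_cong[OF outputs, of e_v2t1] fun_cong[OF outputs, of e_v3t2]
    by (simp_all add: output_index_def)
  ultimately have "W = edge_index i j k u1 u2 (W e_v1v2) (W e_v1v3)"
    by (intro ext) (simp add: edge_index_def split: edge.split)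
  moreover have "W e < ex_cap e" for e using W by (auto simp: assignments_def ex_E_def PiE_iff)
  then have "W e_v1v2 < 2" "W e_v1v3 < 2" by (metis ex_cap.simps(2), metis ex_cap.simps(3))
  ultimately show "W \<in> (\<lambda>(a, b). edge_index i j k u1 u2 a b) ` ({..<2} \<times> {..<2})" by force
next
  fix W assume "W \<in> (\<lambda>(a, b). edge_index i j k u1 u2 a b) ` ({..<2} \<times> {..<2})"
  then obtain a b where "a < 2" "b < 2" and W: "W = edge_index i j k u1 u2 a b" by auto
  have "W \<in> assignments ex_E ex_cap"
    unfolding assignments_def ex_E_def W
    using assms \<open>a < 2\<close> \<open>b < 2\<close> by (auto simp: PiE_def edge_index_def split: edge.splits)
  moreover have "restrict W {e_s1v2, e_s2v1, e_s3v3} = input_index i j k"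
    by (rule ext) (auto simp: W edge_index_def input_index_def)
  moreover have "restrict W {e_v2t1, e_v3t2} = output_index u1 u2"
    by (rule ext) (auto simp: W edge_index_def output_index_def)
  ultimately show "W \<in> {W \<in> assignments ex_E ex_cap.
      restrict W {e_s1v2, e_s2v1, e_s3v3} = input_index i j k
      \<and> restrict W {e_v2t1, e_v3t2} = output_index u1 u2}" by blast
qed

definition v1_array :: "(node \<Rightarrow> (edge \<Rightarrow> nat) \<Rightarrow> complex) \<Rightarrow> array3" where
  "v1_array Tn j a b = Tn v1 (restrict (edge_index 0 j 0 0 0 a b) {e_s2v1, e_v1v2, e_v1v3})"

definition v2_array :: "(node \<Rightarrow> (edge \<Rightarrow> nat) \<Rightarrow> complex) \<Rightarrow> array3" where
  "v2_array Tn a i u = Tn v2 (restrict (edge_index i 0 0 u 0 a 0) {e_v1v2, e_s1v2, e_v2t1})"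

definition v3_array :: "(node \<Rightarrow> (edge \<Rightarrow> nat) \<Rightarrow> complex) \<Rightarrow> array3" where
  "v3_array Tn b k u = Tn v3 (restrict (edge_index 0 0 k 0 u 0 b) {e_v1v3, e_s3v3, e_v3t2})"

lemma ex_contraction:
  assumes "i < 2" "j < 2" "k < 2" "u1 < 3" "u2 < 3"
  shows "contraction ex_S ex_T ex_V ex_E ex_ends ex_cap Tn (output_index u1 u2) (input_index i j k)
     = (\<Sum>a<2. \<Sum>b<2. v1_array Tn j a b * v2_array Tn a i u1 * v3_array Tn b k u2)"
proof -
  have "inj_on (\<lambda>(a, b). edge_index i j k u1 u2 a b) X" for X
  proof (rule inj_onI, clarsimp)
    fix a b a' b' assume "edge_index i j k u1 u2 a b = edge_index i j k u1 u2 a' b'"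
    from fun_cong[OF this, of e_v1v2] fun_cong[OF this, of e_v1v3] show "a = a' \<and> b = b'"
      by (simp add: edge_index_def)
  qed
  moreover have
    "restrict (edge_index i j k u1 u2 a b) {e_s2v1, e_v1v2, e_v1v3}
      = restrict (edge_index 0 j 0 0 0 a b) {e_s2v1, e_v1v2, e_v1v3}"
    "restrict (edge_index i j k u1 u2 a b) {e_v1v2, e_s1v2, e_v2t1}
      = restrict (edge_index i 0 0 u1 0 a 0) {e_v1v2, e_s1v2, e_v2t1}"
    "restrict (edge_index i j k u1 u2 a b) {e_v1v3, e_s3v3, e_v3t2}
      = restrict (edge_index 0 0 k 0 u2 0 b) {e_v1v3, e_s3v3, e_v3t2}"
    for a b by (rule ext, simp add: edge_index_def)+
  ultimately show ?thesis
    unfolding contraction_def ex_input_edges ex_output_edges ex_boundary_assignments[OF assms]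
      ex_V_def
    by (simp add: sum.reindex sum.cartesian_product' ex_incident v1_array_def v2_array_def
        v3_array_def mult.assoc)
qed

lemma ex_rank_le_7:
  "set_mat_rank ex_outputs ex_inputs (contraction ex_S ex_T ex_V ex_E ex_ends ex_cap Tn) \<le> 7"
proof -
  let ?C = "contraction ex_S ex_T ex_V ex_E ex_ends ex_cap Tn"
  obtain X where "\<exists>i<2. \<exists>j<2. \<exists>k<2. X i j k \<noteq> 0"
    and kernel: "\<forall>u1<3. \<forall>u2<3. net_map (v1_array Tn) (v2_array Tn) (v3_array Tn) X u1 u2 = 0"
    using singular_net_always unfolding singular_net_def by blast
  then obtain i j k where ijk: "i < 2" "j < 2" "k < 2" "X i j k \<noteq> 0" by blast
  have "(\<Sum>f\<in>ex_inputs. ?C r f * X (f e_s1v2) (f e_s2v1) (f e_s3v3)) = 0" if r: "r \<in> ex_outputs" for r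
  proof -
    obtain u1 u2 where u: "u1 < 3" "u2 < 3" "r = output_index u1 u2"
      using r by (force simp: ex_outputs_eq)
    then have "(\<Sum>f\<in>ex_inputs. ?C r f * X (f e_s1v2) (f e_s2v1) (f e_s3v3))
        = net_map (v1_array Tn) (v2_array Tn) (v3_array Tn) X u1 u2"
      unfolding sum_ex_inputs net_map_def by (simp add: ex_contraction sum_lessThan_2)
    then show ?thesis using kernel u by simp
  qed
  then have "set_mat_rank ex_outputs ex_inputs ?C < card ex_inputs"
    using finite_ex_assignments input_index_mem ijk
    by (intro set_mat_rank_less_card[where d = "input_index i j k"
        and x = "\<lambda>f. X (f e_s1v2) (f e_s2v1) (f e_s3v3)"]) auto
  then show ?thesis using card_ex_inputs by simp
qed

text \<open>Vertex \<open>v\<^sub>1\<close> copies its input index to both of its other legs, while \<open>v\<^sub>2\<close> and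
  \<open>v\<^sub>3\<close> add their two incoming indices, so the input \<open>(i, j, k)\<close> is sent to the output
  \<open>(i + j, k + j)\<close>. Only \<open>(0, 1, 0)\<close> and \<open>(1, 0, 1)\<close> collide.\<close>
definition copy_add_tensors :: "node \<Rightarrow> (edge \<Rightarrow> nat) \<Rightarrow> complex" where
  "copy_add_tensors v W = (case v of
       v1 \<Rightarrow> of_bool (W e_v1v2 = W e_s2v1 \<and> W e_v1v3 = W e_s2v1)
     | v2 \<Rightarrow> of_bool (W e_v2t1 = W e_s1v2 + W e_v1v2)
     | v3 \<Rightarrow> of_bool (W e_v3t2 = W e_s3v3 + W e_v1v3)
     | _ \<Rightarrow> 0)"

lemma copy_add_contraction:
  assumes "i < 2" "j < 2" "k < 2" "u1 < 3" "u2 < 3"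
  shows "contraction ex_S ex_T ex_V ex_E ex_ends ex_cap copy_add_tensors
       (output_index u1 u2) (input_index i j k) = of_bool (u1 = i + j \<and> u2 = k + j)"
  using assms(2) unfolding ex_contraction[OF assms]
  by (auto simp: less_2_cases_iff sum_lessThan_2 v1_array_def v2_array_def v3_array_def
      copy_add_tensors_def edge_index_def)

lemma ex_rank_ge_7:
  "7 \<le> set_mat_rank ex_outputs ex_inputs
         (contraction ex_S ex_T ex_V ex_E ex_ends ex_cap copy_add_tensors)"
proof -
  define K :: "(nat \<times> nat \<times> nat) set"
    where "K = {(0, 0, 0), (0, 0, 1), (1, 0, 0), (1, 0, 1), (0, 1, 1), (1, 1, 0), (1, 1, 1)}"
  have "card K \<le> set_mat_rank ex_outputs ex_inputs
      (contraction ex_S ex_T ex_V ex_E ex_ends ex_cap copy_add_tensors)"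
    by (rule set_mat_rank_ge_card[where \<rho> = "\<lambda>(i, j, k). output_index (i + j) (k + j)"
        and \<gamma> = "\<lambda>(i, j, k). input_index i j k"])
      (auto simp: K_def finite_ex_assignments input_index_mem output_index_mem copy_add_contraction)
  moreover have "card K = 7" by (simp add: K_def)
  ultimately show ?thesis by simp
qed

lemma QMF_ex: "QMF ex_S ex_T ex_V ex_E ex_ends ex_cap = 7"
proof -
  define R where "R = {set_mat_rank ex_outputs ex_inputs
    (contraction ex_S ex_T ex_V ex_E ex_ends ex_cap Tn) | Tn. True}"
  have "R \<subseteq> {..7}" unfolding R_def using ex_rank_le_7 by auto
  moreover have "7 \<in> R" unfolding R_def using ex_rank_le_7 ex_rank_ge_7 le_antisym by blast
  ultimately have "Max R = 7" by (intro Max_eqI) (auto intro: finite_subset)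
  then show ?thesis unfolding QMF_def ex_input_edges ex_output_edges R_def .
qed

lemma finite_ex_E: "finite ex_E"
  by (simp add: ex_E_def edge_UNIV)

lemma ex_cut_capacity_ge_8:
  assumes "Sb \<inter> Tb = {}" "Sb \<union> Tb = ex_S \<union> ex_T \<union> ex_V" "ex_S \<subseteq> Sb" "ex_T \<subseteq> Tb"
  shows "8 \<le> (\<Prod>e\<in>{e \<in> ex_E. (fst (ex_ends e) \<in> Sb \<and> snd (ex_ends e) \<in> Tb) \<or>
                            (fst (ex_ends e) \<in> Tb \<and> snd (ex_ends e) \<in> Sb)}. ex_cap e)"
proof -
  have sides: "s1 \<in> Sb" "s2 \<in> Sb" "s3 \<in> Sb" "t1 \<in> Tb" "t2 \<in> Tb"
    "s1 \<notin> Tb" "s2 \<notin> Tb" "s3 \<notin> Tb" "t1 \<notin> Sb" "t2 \<notin> Sb"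
    "v1 \<in> Tb \<longleftrightarrow> v1 \<notin> Sb" "v2 \<in> Tb \<longleftrightarrow> v2 \<notin> Sb" "v3 \<in> Tb \<longleftrightarrow> v3 \<notin> Sb"
    using assms unfolding ex_S_def ex_T_def ex_V_def by blast+
  show ?thesis
    unfolding prod.inter_filter[OF finite_ex_E] unfolding ex_E_def edge_UNIV
    by (cases "v1 \<in> Sb"; cases "v2 \<in> Sb"; cases "v3 \<in> Sb") (simp_all add: sides)
qed

lemma ex_input_cut: "{e_s2v1, e_s1v2, e_s3v3} \<in> edge_cut_sets ex_S ex_T ex_V ex_E ex_ends"
  unfolding edge_cut_sets_def
  by (intro CollectI exI[of _ ex_S] exI[of _ "ex_T \<union> ex_V"])
    (auto simp: ex_S_def ex_T_def ex_V_def ex_E_def edge_UNIV)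

lemma QMC_ex: "QMC ex_S ex_T ex_V ex_E ex_ends ex_cap = 8"
proof -
  define R where "R = {\<Prod>e\<in>C. ex_cap e | C. C \<in> edge_cut_sets ex_S ex_T ex_V ex_E ex_ends}"
  have "finite (edge_cut_sets ex_S ex_T ex_V ex_E ex_ends)"
    by (rule finite_subset[of _ "Pow ex_E"]) (auto simp: edge_cut_sets_def finite_ex_E)
  then have "finite R" unfolding R_def by (simp add: setcompr_eq_image)
  moreover have "\<forall>y\<in>R. 8 \<le> y" unfolding R_def edge_cut_sets_def using ex_cut_capacity_ge_8 by auto
  moreover have "8 \<in> R" unfolding R_def using ex_input_cut by force
  ultimately have "Min R = 8" by (intro Min_eqI) auto
  then show ?thesis unfolding QMC_def R_def .
qed

theorem mainTheorem9:
  shows "QMC ex_S ex_T ex_V ex_E ex_ends ex_cap = 8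
       \<and> QMF ex_S ex_T ex_V ex_E ex_ends ex_cap = 7"
  using QMC_ex QMF_ex by simp

end
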